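(* Consider the DRRP described in the context for a fixed realization $\xi$, and let $(z,y,b,w,d)$ be an optimal solution in which no RV passes through node $i\in\mathcal{N}_\text{SV}\cap\mathcal{N}_\text{RV}$ at time $t$, i.e. $\sum_{(i,j)\in\mathcal{E}_\text{RV}}z_{i,j}^t=0$ and $\sum_{(j,i)\in\mathcal{E}_\text{RV}}z_{j,i}^{t-1}=0$. Then there is an optimal solution (with the same RV movements $z$) in which $y_i^{+,t}=y_i^{-,t}=0$. Moreover, if $r_i^t>0$ for all pairs $(i,t)$, then no optimal solution has $y_i^{+,t}=y_i^{-,t}>0$ at any $(i,t)$ where no RV is present.
   Context: Data: a directed graph $\mathcal{G}_\text{SV}=(\mathcal{N}_\text{SV},\mathcal{E}_\text{SV})$ of possible shared-vehicle (SV) journeys; a directed graph $\mathcal{G}_\text{RV}=(\mathcal{N}_\text{RV},\mathcal{E}_\text{RV})$ of possible one-step rebalancing-vehicle (RV) movements; a finite set $\mathcal{V}$ of identical RVs, each able to carry an integer number $\overline{b}$ of SVs; horizon $T$; maximum journey duration $K$; integer station capacities $\overline{d}_i$; an integer bound $\overline{y}$; costs $c_{i,j}^t\in\mathbb{R}$ and $r_i^t\ge 0$. For a realization $\xi$, demands $f_{i,j}^{t,k}(\xi)\in\mathbb{N}$ and loss functions $l_{i,j}^{t,k}(\cdot;\xi)$, each a convex piecewise affine function through the origin with breakpoints at integers. Variables $y_i^{\pm,t}$ are indexed by $i\in\mathcal{N}_\text{SV}\cap\mathcal{N}_\text{RV}$ (and are taken to be $0$ where not defined). The DRRP is: minimize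 over $z,y,b,w,d$ $$\sum_{t=1}^T\Big[\sum_{(i,j)\in\mathcal{E}_\text{SV}}\sum_{k=0}^K l_{i,j}^{t,k}(f_{i,j}^{t,k}(\xi)-w_{i,j}^{t,k};\xi)+\sum_{(i,j)\in\mathcal{E}_\text{RV}}c_{i,j}^tz_{i,j}^t+\sum_{i\in\mathcal{N}_\text{SV}\cap\mathcal{N}_\text{RV}}r_i^t(y_i^{+,t}+y_i^{-,t})\Big]$$ subject to: (a) $d_i^t=d_i^{t-1}+\sum_{k=0}^K\big(\sum_{(j,i)\in\mathcal{E}_\text{SV}}w_{j,i}^{t-k,k}-\sum_{(i,j)\in\mathcal{E}_\text{SV}}w_{i,j}^{t,k}\big)+y_i^{-,t}-y_i^{+,t}$ for $t=1,\dots,T$, $i\in\mathcal{N}_\text{SV}$; (b) $\sum_{(i,j)\in\mathcal{E}_\text{RV}}b_{i,j}^t=\sum_{(j,i)\in\mathcal{E}_\text{RV}}b_{j,i}^{t-1}+y_i^{+,t}-y_i^{-,t}$ for $t=1,\dots,T$, $i\in\mathcal{N}_\text{RV}$; (c) $\sum_{(i,j)\in\mathcal{E}_\text{RV}}z_{i,j}^t=\sum_{(j,i)\in\mathcal{E}_\text{RV}}z_{j,i}^{t-1}$ for $t=1,\dots,T$, $i\in\mathcal{N}_\text{RV}$; (d) $0\le b_{i,j}^t\le\overline{b}z_{i,j}^t$ for $t=0,\dots,T$, $(i,j)\in\mathcal{E}_\text{RV}$, with integers $b_{i,j}^0$ given; (e) $0\le w_{i,j}^{t,k}\le f_{i,j}^{t,k}(\xi)$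 for $t=1,\dots,T$, $k=0,\dots,K$, $(i,j)\in\mathcal{E}_\text{SV}$, with $w_{i,j}^{t,k}$ given for $1-K\le t\le 0$, $-t<k\le K$; (f) $0\le d_i^t\le\overline{d}_i$ for $t=0,\dots,T$, with integers $d_i^0$ given; (g) $0\le y_i^{+,t}\le\overline{y}$, $0\le y_i^{-,t}\le\overline{y}$; (h) integers $z_{i,j}^0$ given with $\sum_{i,j}z_{i,j}^0=|\mathcal{V}|$; (i) all $w,y,b,z$ integer-valued. *)

theory Defs
  imports "HOL-Analysis.Analysis"
begin

text \<open>Data of a DRRP instance for a fixed realization xi (so demands and losses
  are given directly).  Time indices are integers; nodes have type 'n, arcs are pairs.\<close>

record 'n drrp_data =
  NSV  :: "'n set"
  ESV  :: "('n \<times> 'n) set"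
  NRV  :: "'n set"
  ERV  :: "('n \<times> 'n) set"
  nV   :: nat                      \<comment> \<open>number |V| of rebalancing vehicles\<close>
  bbar :: nat                      \<comment> \<open>RV capacity\<close>
  Hor  :: nat
  Kmax :: nat                      \<comment> \<open>maximal journey duration K\<close>
  dbar :: "'n \<Rightarrow> int"             \<comment> \<open>station capacities\<close>
  ybar :: int                      \<comment> \<open>bound on loading/unloading\<close>
  cost :: "int \<Rightarrow> 'n \<times> 'n \<Rightarrow> real"
  rcost :: "int \<Rightarrow> 'n \<Rightarrow> real"
  dem  :: "int \<Rightarrow> nat \<Rightarrow> 'n \<times> 'n \<Rightarrow> nat"
  loss :: "int \<Rightarrow> nat \<Rightarrow> 'n \<times> 'n \<Rightarrow> real \<Rightarrow> real"
  z0   :: "'n \<times> 'n \<Rightarrow> int"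
  b0   :: "'n \<times> 'n \<Rightarrow> int"
  d0   :: "'n \<Rightarrow> int"
  wpast :: "int \<Rightarrow> nat \<Rightarrow> 'n \<times> 'n \<Rightarrow> int" \<comment> \<open>given w^{t,k} for 1-K <= t <= 0, -t < k <= K\<close>

text \<open>A candidate solution (z,y,b,w,d); values outside the index ranges are irrelevant.\<close>

record 'n drrp_sol =
  zv  :: "int \<Rightarrow> 'n \<times> 'n \<Rightarrow> real"
  ypv :: "int \<Rightarrow> 'n \<Rightarrow> real"
  ymv :: "int \<Rightarrow> 'n \<Rightarrow> real"
  bv  :: "int \<Rightarrow> 'n \<times> 'n \<Rightarrow> real"
  wv  :: "int \<Rightarrow> nat \<Rightarrow> 'n \<times> 'n \<Rightarrow> real"
  dv  :: "int \<Rightarrow> 'n \<Rightarrow> real"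

definition out_arcs :: "('n \<times> 'n) set \<Rightarrow> 'n \<Rightarrow> ('n \<times> 'n) set" where
  "out_arcs E i = {e \<in> E. fst e = i}"

definition in_arcs :: "('n \<times> 'n) set \<Rightarrow> 'n \<Rightarrow> ('n \<times> 'n) set" where
  "in_arcs E i = {e \<in> E. snd e = i}"

definition cpwa_int :: "(real \<Rightarrow> real) \<Rightarrow> bool" where
  "cpwa_int g \<longleftrightarrow> g 0 = 0 \<and> convex_on UNIV g \<and>
     (\<forall>n::int. \<exists>a c. \<forall>x \<in> {real_of_int n .. real_of_int n + 1}. g x = a * x + c)"

definition drrp_wf :: "'n drrp_data \<Rightarrow> bool" where
  "drrp_wf P \<longleftrightarrow>
     finite (NSV P) \<and> finite (NRV P) \<and>
     ESV P \<subseteq> NSV P \<times> NSV P \<and> ERV P \<subseteq> NRV P \<times> NRV P \<and>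
     (\<forall>t \<in> {1..int (Hor P)}. \<forall>i \<in> NSV P \<inter> NRV P. rcost P t i \<ge> 0) \<and>
     (\<forall>t \<in> {1..int (Hor P)}. \<forall>k \<in> {0..Kmax P}. \<forall>e \<in> ESV P. cpwa_int (loss P t k e))"

definition drrp_feasible :: "'n drrp_data \<Rightarrow> 'n drrp_sol \<Rightarrow> bool" where
  "drrp_feasible P s \<longleftrightarrow>
     (let T = int (Hor P); K = Kmax P; B = NSV P \<inter> NRV P;
          yp = (\<lambda>t i. if i \<in> B then ypv s t i else 0);
          ym = (\<lambda>t i. if i \<in> B then ymv s t i else 0) in
     \<comment> \<open>given initial data\<close>
     (\<forall>e \<in> ERV P. zv s 0 e = real_of_int (z0 P e)) \<and>
     (\<forall>e \<in> ERV P. bv s 0 e = real_of_int (b0 P e)) \<and>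
     (\<forall>i \<in> NSV P. dv s 0 i = real_of_int (d0 P i)) \<and>
     (\<forall>t. \<forall>k \<le> K. \<forall>e \<in> ESV P. 1 - int K \<le> t \<and> t \<le> 0 \<and> - t < int k \<longrightarrow>
          wv s t k e = real_of_int (wpast P t k e)) \<and>
     \<comment> \<open>(a)\<close>
     (\<forall>t \<in> {1..T}. \<forall>i \<in> NSV P.
        dv s t i = dv s (t - 1) i
          + (\<Sum>k = 0..K. (\<Sum>e \<in> in_arcs (ESV P) i. wv s (t - int k) k e)
                          - (\<Sum>e \<in> out_arcs (ESV P) i. wv s t k e))
          + ym t i - yp t i) \<and>
     \<comment> \<open>(b)\<close>
     (\<forall>t \<in> {1..T}. \<forall>i \<in> NRV P.
        (\<Sum>e \<in> out_arcs (ERV P) i. bv s t e)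
          = (\<Sum>e \<in> in_arcs (ERV P) i. bv s (t - 1) e) + yp t i - ym t i) \<and>
     \<comment> \<open>(c)\<close>
     (\<forall>t \<in> {1..T}. \<forall>i \<in> NRV P.
        (\<Sum>e \<in> out_arcs (ERV P) i. zv s t e) = (\<Sum>e \<in> in_arcs (ERV P) i. zv s (t - 1) e)) \<and>
     \<comment> \<open>(d)\<close>
     (\<forall>t \<in> {0..T}. \<forall>e \<in> ERV P. 0 \<le> bv s t e \<and> bv s t e \<le> real (bbar P) * zv s t e) \<and>
     \<comment> \<open>(e)\<close>
     (\<forall>t \<in> {1..T}. \<forall>k \<in> {0..K}. \<forall>e \<in> ESV P.
        0 \<le> wv s t k e \<and> wv s t k e \<le> real (dem P t k e)) \<and>
     \<comment> \<open>(f)\<close>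
     (\<forall>t \<in> {0..T}. \<forall>i \<in> NSV P. 0 \<le> dv s t i \<and> dv s t i \<le> real_of_int (dbar P i)) \<and>
     \<comment> \<open>(g)\<close>
     (\<forall>t \<in> {1..T}. \<forall>i \<in> B.
        0 \<le> ypv s t i \<and> ypv s t i \<le> real_of_int (ybar P) \<and>
        0 \<le> ymv s t i \<and> ymv s t i \<le> real_of_int (ybar P)) \<and>
     \<comment> \<open>(h)\<close>
     (\<Sum>e \<in> ERV P. z0 P e) = int (nV P) \<and>
     \<comment> \<open>(i) integrality\<close>
     (\<forall>t \<in> {1..T}. \<forall>k \<in> {0..K}. \<forall>e \<in> ESV P. wv s t k e \<in> \<int>) \<and>
     (\<forall>t \<in> {1..T}. \<forall>i \<in> B. ypv s t i \<in> \<int> \<and> ymv s t i \<in> \<int>) \<and>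
     (\<forall>t \<in> {0..T}. \<forall>e \<in> ERV P. bv s t e \<in> \<int> \<and> zv s t e \<in> \<int>))"

definition drrp_obj :: "'n drrp_data \<Rightarrow> 'n drrp_sol \<Rightarrow> real" where
  "drrp_obj P s =
     (\<Sum>t = 1..int (Hor P).
        (\<Sum>e \<in> ESV P. \<Sum>k = 0..Kmax P. loss P t k e (real (dem P t k e) - wv s t k e))
      + (\<Sum>e \<in> ERV P. cost P t e * zv s t e)
      + (\<Sum>i \<in> NSV P \<inter> NRV P. rcost P t i * (ypv s t i + ymv s t i)))"

definition drrp_optimal :: "'n drrp_data \<Rightarrow> 'n drrp_sol \<Rightarrow> bool" where
  "drrp_optimal P s \<longleftrightarrow> drrp_feasible P s \<and>
     (\<forall>s'. drrp_feasible P s' \<longrightarrow> drrp_obj P s \<le> drrp_obj P s')"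

definition no_RV_at :: "'n drrp_data \<Rightarrow> 'n drrp_sol \<Rightarrow> 'n \<Rightarrow> int \<Rightarrow> bool" where
  "no_RV_at P s i t \<longleftrightarrow>
     (\<Sum>e \<in> out_arcs (ERV P) i. zv s t e) = 0 \<and>
     (\<Sum>e \<in> in_arcs (ERV P) i. zv s (t - 1) e) = 0"

end

theory Submission
  imports Defs
begin

text \<open>At a station where no RV is present, constraint (d) forces every RV load on the arcs
  into and out of the station to vanish, so the RV balance (b) forces y+ = y-. Loading and
  unloading the same number of SVs cancels in the station balance (a), so setting both to zero
  keeps the solution feasible and saves r(i,t) (y+ + y-) >= 0; when r(i,t) > 0 an optimal
  solution therefore cannot transfer anything there.\<close>

definition cancel_transfer :: "'n drrp_sol \<Rightarrow> int \<Rightarrow> 'n \<Rightarrow> 'n drrp_sol" where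
  "cancel_transfer s t i =
     s\<lparr>ypv := (ypv s)(t := (ypv s t)(i := 0)), ymv := (ymv s)(t := (ymv s t)(i := 0))\<rparr>"

lemma sum_eq_0_if_dominated:
  fixes f g :: "'a \<Rightarrow> real"
  assumes "\<And>e. e \<in> A \<Longrightarrow> 0 \<le> f e \<and> f e \<le> c * g e" and "sum g A = 0"
  shows "sum f A = 0"
proof -
  have "sum f A \<le> c * sum g A"
    unfolding sum_distrib_left by (rule sum_mono) (use assms(1) in blast)
  moreover have "0 \<le> sum f A"
    by (rule sum_nonneg) (use assms(1) in blast)
  ultimately show ?thesis using assms(2) by simp
qed

lemma arcs_subset: "out_arcs E i \<subseteq> E" "in_arcs E i \<subseteq> E"
  unfolding out_arcs_def in_arcs_def by auto

lemma drrp_feasible_RV_load_bounds: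
  assumes "drrp_feasible P s" and "t \<in> {0..int (Hor P)}" and "e \<in> ERV P"
  shows "0 \<le> bv s t e \<and> bv s t e \<le> real (bbar P) * zv s t e"
  using assms unfolding drrp_feasible_def Let_def by (elim conjE) blast

lemma drrp_feasible_RV_balance:
  assumes "drrp_feasible P s" and "t \<in> {1..int (Hor P)}" and "i \<in> NSV P \<inter> NRV P"
  shows "(\<Sum>e \<in> out_arcs (ERV P) i. bv s t e)
           = (\<Sum>e \<in> in_arcs (ERV P) i. bv s (t - 1) e) + ypv s t i - ymv s t i"
  using assms unfolding drrp_feasible_def Let_def by (elim conjE) auto

lemma drrp_feasible_transfer_bounds:
  assumes "drrp_feasible P s" and "t \<in> {1..int (Hor P)}" and "i \<in> NSV P \<inter> NRV P"
  shows "0 \<le> ypv s t i \<and> ypv s t i \<le> real_of_int (ybar P) \<and>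
         0 \<le> ymv s t i \<and> ymv s t i \<le> real_of_int (ybar P)"
proof -
  have "\<forall>t \<in> {1..int (Hor P)}. \<forall>i \<in> NSV P \<inter> NRV P.
        0 \<le> ypv s t i \<and> ypv s t i \<le> real_of_int (ybar P) \<and>
        0 \<le> ymv s t i \<and> ymv s t i \<le> real_of_int (ybar P)"
    using assms(1) unfolding drrp_feasible_def Let_def by (elim conjE) assumption
  then show ?thesis using assms(2,3) by blast
qed

lemma drrp_feasible_transfers_integral:
  assumes "drrp_feasible P s" and "t \<in> {1..int (Hor P)}" and "i \<in> NSV P \<inter> NRV P"
  shows "ypv s t i \<in> \<int> \<and> ymv s t i \<in> \<int>"
proof -
  have "\<forall>t \<in> {1..int (Hor P)}. \<forall>i \<in> NSV P \<inter> NRV P. ypv s t i \<in> \<int> \<and> ymv s t i \<in> \<int>"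
    using assms(1) unfolding drrp_feasible_def Let_def by (elim conjE) assumption
  then show ?thesis using assms(2,3) by blast
qed

lemma drrp_feasible_RV_loads_vanish:
  assumes F: "drrp_feasible P s" and t: "t \<in> {0..int (Hor P)}" and A: "A \<subseteq> ERV P"
    and "(\<Sum>e \<in> A. zv s t e) = 0"
  shows "(\<Sum>e \<in> A. bv s t e) = 0"
proof (rule sum_eq_0_if_dominated)
  show "0 \<le> bv s t e \<and> bv s t e \<le> real (bbar P) * zv s t e" if "e \<in> A" for e
    using drrp_feasible_RV_load_bounds[OF F t] A that by blast
qed fact

lemma drrp_feasible_no_RV_transfers_balance:
  assumes F: "drrp_feasible P s" and i: "i \<in> NSV P \<inter> NRV P" and t: "t \<in> {1..int (Hor P)}"
    and "no_RV_at P s i t"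
  shows "ypv s t i = ymv s t i"
proof -
  have "(\<Sum>e \<in> out_arcs (ERV P) i. bv s t e) = 0"
    by (rule drrp_feasible_RV_loads_vanish[OF F])
      (use t \<open>no_RV_at P s i t\<close> arcs_subset in \<open>simp_all add: no_RV_at_def\<close>)
  moreover have "(\<Sum>e \<in> in_arcs (ERV P) i. bv s (t - 1) e) = 0"
    by (rule drrp_feasible_RV_loads_vanish[OF F])
      (use t \<open>no_RV_at P s i t\<close> arcs_subset in \<open>simp_all add: no_RV_at_def\<close>)
  ultimately show ?thesis
    using drrp_feasible_RV_balance[OF F t i] by linarith
qed

lemma drrp_feasible_same_net_transfers:
  assumes F: "drrp_feasible P s"
    and same: "zv s' = zv s" "bv s' = bv s" "wv s' = wv s" "dv s' = dv s"
    and net: "\<And>t i. t \<in> {1..int (Hor P)} \<Longrightarrow> i \<in> NSV P \<inter> NRV P \<Longrightarrow>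
                ypv s' t i - ymv s' t i = ypv s t i - ymv s t i"
    and bounds: "\<forall>t \<in> {1..int (Hor P)}. \<forall>i \<in> NSV P \<inter> NRV P.
        0 \<le> ypv s' t i \<and> ypv s' t i \<le> real_of_int (ybar P) \<and>
        0 \<le> ymv s' t i \<and> ymv s' t i \<le> real_of_int (ybar P)"
    and integral: "\<forall>t \<in> {1..int (Hor P)}. \<forall>i \<in> NSV P \<inter> NRV P.
        ypv s' t i \<in> \<int> \<and> ymv s' t i \<in> \<int>"
  shows "drrp_feasible P s'"
proof -
  let ?B = "NSV P \<inter> NRV P"
  have net_if: "(if i \<in> ?B then ypv s' t i else 0) - (if i \<in> ?B then ymv s' t i else 0)
      = (if i \<in> ?B then ypv s t i else 0) - (if i \<in> ?B then ymv s t i else 0)"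
    if "t \<in> {1..int (Hor P)}" for t i
    using net[OF that] by simp
  have station: "\<forall>t \<in> {1..int (Hor P)}. \<forall>i \<in> NSV P.
        dv s t i = dv s (t - 1) i
          + (\<Sum>k = 0..Kmax P. (\<Sum>e \<in> in_arcs (ESV P) i. wv s (t - int k) k e)
                          - (\<Sum>e \<in> out_arcs (ESV P) i. wv s t k e))
          + (if i \<in> ?B then ymv s' t i else 0) - (if i \<in> ?B then ypv s' t i else 0)"
  proof -
    have "\<forall>t \<in> {1..int (Hor P)}. \<forall>i \<in> NSV P.
        dv s t i = dv s (t - 1) i
          + (\<Sum>k = 0..Kmax P. (\<Sum>e \<in> in_arcs (ESV P) i. wv s (t - int k) k e)
                          - (\<Sum>e \<in> out_arcs (ESV P) i. wv s t k e))
          + (if i \<in> ?B then ymv s t i else 0) - (if i \<in> ?B then ypv s t i else 0)"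
      using F unfolding drrp_feasible_def Let_def by (elim conjE) assumption
    with net_if show ?thesis by (smt (verit))
  qed
  have vehicle: "\<forall>t \<in> {1..int (Hor P)}. \<forall>i \<in> NRV P.
        (\<Sum>e \<in> out_arcs (ERV P) i. bv s t e)
          = (\<Sum>e \<in> in_arcs (ERV P) i. bv s (t - 1) e)
            + (if i \<in> ?B then ypv s' t i else 0) - (if i \<in> ?B then ymv s' t i else 0)"
  proof -
    have "\<forall>t \<in> {1..int (Hor P)}. \<forall>i \<in> NRV P.
        (\<Sum>e \<in> out_arcs (ERV P) i. bv s t e)
          = (\<Sum>e \<in> in_arcs (ERV P) i. bv s (t - 1) e)
            + (if i \<in> ?B then ypv s t i else 0) - (if i \<in> ?B then ymv s t i else 0)"
      using F unfolding drrp_feasible_def Let_def by (elim conjE) assumption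
    with net_if show ?thesis by (smt (verit))
  qed
  show ?thesis
    using F station vehicle bounds integral unfolding drrp_feasible_def Let_def same
    by (elim conjE) ((intro conjI)?; assumption)
qed

lemma drrp_feasible_cancel_transfer:
  assumes F: "drrp_feasible P s" and balanced: "ypv s t i = ymv s t i"
  shows "drrp_feasible P (cancel_transfer s t i)"
proof (rule drrp_feasible_same_net_transfers[OF F])
  show "ypv (cancel_transfer s t i) t' i' - ymv (cancel_transfer s t i) t' i'
          = ypv s t' i' - ymv s t' i'" for t' i'
    using balanced by (simp add: cancel_transfer_def)
  show "\<forall>t' \<in> {1..int (Hor P)}. \<forall>i' \<in> NSV P \<inter> NRV P.
      0 \<le> ypv (cancel_transfer s t i) t' i' \<and> ypv (cancel_transfer s t i) t' i' \<le> real_of_int (ybar P) \<and>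
      0 \<le> ymv (cancel_transfer s t i) t' i' \<and> ymv (cancel_transfer s t i) t' i' \<le> real_of_int (ybar P)"
    using drrp_feasible_transfer_bounds[OF F] by (force simp: cancel_transfer_def)
  show "\<forall>t' \<in> {1..int (Hor P)}. \<forall>i' \<in> NSV P \<inter> NRV P.
      ypv (cancel_transfer s t i) t' i' \<in> \<int> \<and> ymv (cancel_transfer s t i) t' i' \<in> \<int>"
    using drrp_feasible_transfers_integral[OF F] by (simp add: cancel_transfer_def)
qed (simp_all add: cancel_transfer_def)

lemma drrp_obj_cancel_transfer:
  assumes "finite (NSV P \<inter> NRV P)" and "i \<in> NSV P \<inter> NRV P" and "t \<in> {1..int (Hor P)}"
  shows "drrp_obj P s = drrp_obj P (cancel_transfer s t i) + rcost P t i * (ypv s t i + ymv s t i)"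
proof -
  let ?s' = "cancel_transfer s t i" and ?B = "NSV P \<inter> NRV P"
  have "drrp_obj P s - drrp_obj P ?s' = (\<Sum>t' = 1..int (Hor P). \<Sum>i' \<in> ?B.
      rcost P t' i' * (ypv s t' i' + ymv s t' i') - rcost P t' i' * (ypv ?s' t' i' + ymv ?s' t' i'))"
    by (simp add: drrp_obj_def cancel_transfer_def flip: sum_subtractf)
  also have "\<dots> = (\<Sum>t' = 1..int (Hor P). \<Sum>i' \<in> ?B.
      if i' = i then if t' = t then rcost P t i * (ypv s t i + ymv s t i) else 0 else 0)"
    by (intro sum.cong refl) (auto simp: cancel_transfer_def)
  also have "\<dots> = rcost P t i * (ypv s t i + ymv s t i)"
    using assms by simp
  finally show ?thesis by simp
qed

lemma drrp_optimal_cancel_transfer: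
  assumes W: "drrp_wf P" and O: "drrp_optimal P s"
    and i: "i \<in> NSV P \<inter> NRV P" and t: "t \<in> {1..int (Hor P)}" and "no_RV_at P s i t"
  shows "drrp_optimal P (cancel_transfer s t i)"
  unfolding drrp_optimal_def
proof (intro conjI allI impI)
  have F: "drrp_feasible P s" using O by (simp add: drrp_optimal_def)
  show "drrp_feasible P (cancel_transfer s t i)"
    using drrp_feasible_cancel_transfer[OF F]
      drrp_feasible_no_RV_transfers_balance[OF F i t \<open>no_RV_at P s i t\<close>] .
  have "0 \<le> rcost P t i" and "finite (NSV P \<inter> NRV P)"
    using W i t by (auto simp: drrp_wf_def)
  then have "drrp_obj P (cancel_transfer s t i) \<le> drrp_obj P s"
    using drrp_obj_cancel_transfer[OF _ i t, of s] drrp_feasible_transfer_bounds[OF F t i] by simp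
  moreover have "drrp_obj P s \<le> drrp_obj P s'" if "drrp_feasible P s'" for s'
    using O that by (simp add: drrp_optimal_def)
  ultimately show "drrp_obj P (cancel_transfer s t i) \<le> drrp_obj P s'" if "drrp_feasible P s'" for s'
    using that by (meson order_trans)
qed

lemma drrp_optimal_no_RV_no_transfer:
  assumes W: "drrp_wf P" and O: "drrp_optimal P s"
    and i: "i \<in> NSV P \<inter> NRV P" and t: "t \<in> {1..int (Hor P)}" and "no_RV_at P s i t"
    and r: "rcost P t i > 0"
  shows "ypv s t i = 0 \<and> ymv s t i = 0"
proof -
  have F: "drrp_feasible P s" using O by (simp add: drrp_optimal_def)
  have "drrp_feasible P (cancel_transfer s t i)"
    using drrp_feasible_cancel_transfer[OF F]
      drrp_feasible_no_RV_transfers_balance[OF F i t \<open>no_RV_at P s i t\<close>] .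
  with O have "drrp_obj P s \<le> drrp_obj P (cancel_transfer s t i)"
    by (simp add: drrp_optimal_def)
  moreover have "finite (NSV P \<inter> NRV P)" using W by (simp add: drrp_wf_def)
  ultimately have "rcost P t i * (ypv s t i + ymv s t i) \<le> 0"
    using drrp_obj_cancel_transfer[OF _ i t, of s] by simp
  then have "ypv s t i + ymv s t i \<le> 0"
    using r by (simp add: mult_le_0_iff)
  then show ?thesis
    using drrp_feasible_transfer_bounds[OF F t i] by linarith
qed

theorem lemma2:
  fixes P :: "'n drrp_data" and s :: "'n drrp_sol" and i :: 'n and t :: int
  assumes "drrp_wf P"
    and "drrp_optimal P s"
    and "i \<in> NSV P \<inter> NRV P" and "t \<in> {1..int (Hor P)}"
    and "no_RV_at P s i t"
  shows "(\<exists>s'. drrp_optimal P s' \<and> zv s' = zv s \<and> ypv s' t i = 0 \<and> ymv s' t i = 0) \<and>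
         ((\<forall>t' \<in> {1..int (Hor P)}. \<forall>i' \<in> NSV P \<inter> NRV P. rcost P t' i' > 0) \<longrightarrow>
            (\<forall>s'' i'' t''. drrp_optimal P s'' \<and> i'' \<in> NSV P \<inter> NRV P \<and>
                t'' \<in> {1..int (Hor P)} \<and> no_RV_at P s'' i'' t'' \<longrightarrow>
                \<not> (ypv s'' t'' i'' = ymv s'' t'' i'' \<and> ypv s'' t'' i'' > 0)))"
proof (intro conjI impI allI)
  show "\<exists>s'. drrp_optimal P s' \<and> zv s' = zv s \<and> ypv s' t i = 0 \<and> ymv s' t i = 0"
    using drrp_optimal_cancel_transfer[OF assms]
    by (intro exI[of _ "cancel_transfer s t i"]) (simp add: cancel_transfer_def)
next
  fix s'' i'' t''
  assume "\<forall>t' \<in> {1..int (Hor P)}. \<forall>i' \<in> NSV P \<inter> NRV P. rcost P t' i' > 0"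
    and "drrp_optimal P s'' \<and> i'' \<in> NSV P \<inter> NRV P \<and> t'' \<in> {1..int (Hor P)} \<and> no_RV_at P s'' i'' t''"
  then have "ypv s'' t'' i'' = 0"
    using drrp_optimal_no_RV_no_transfer[OF assms(1), of s'' i'' t''] by simp
  then show "\<not> (ypv s'' t'' i'' = ymv s'' t'' i'' \<and> ypv s'' t'' i'' > 0)" by simp
qed

end
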